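(* Let $A\in\mathbb{R}^{n\times n}$ be Metzler, $J\in\mathbb{R}^{n\times n}$ be nonnegative and $0<T_{min}\le T_{max}<\infty$. The following statements are equivalent: (a) There exist $\lambda,\mu\in\mathbb{R}^n_{>0}$ such that, with $V(x)=\lambda^\top x$, $V(e^{A\theta}Jx)-V(x)\le-\mu^\top x$ for all $x\in\mathbb{R}^n_{\ge0}$ and all $\theta\in[T_{min},T_{max}]$ (i.e. $V(x(t_{k+1}))-V(x(t_k))\le-\mu^\top x(t_k)$ along trajectories with $T_k\in[T_{min},T_{max}]$). (b) There exists $\lambda\in\mathbb{R}^n_{>0}$ such that $\lambda^\top(e^{A\theta}J-I_n)<0$ for all $\theta\in[T_{min},T_{max}]$. (c) There exist a differentiable $\zeta:[0,T_{max}]\to\mathbb{R}^n$ with $\zeta(0)\in\mathbb{R}^n_{>0}$ and $\varepsilon>0$ such that $\zeta(\tau)^\top A-\dot\zeta(\tau)^\top\le0$ for all $\tau\in[0,T_{max}]$ and $\zeta(\theta)^\top J-\zeta(0)^\top+\varepsilon\mathbf{1}_n^\top\le0$ for all $\theta\in[T_{min},T_{max}]$.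
   Context: Consider the linear impulsive system $\dot x(t)=Ax(t)$ for $t\neq t_k$, $x(t_k^+)=Jx(t_k)$, $x(t_0)=x_0$, where $x(t)\in\mathbb{R}^n$, $x(t^+):=\lim_{s\downarrow t}x(s)$ (left-continuous trajectories), and the impulse times are strictly increasing with $t_k\to\infty$; $T_k:=t_{k+1}-t_k$. A matrix is Metzler if its off-diagonal entries are nonnegative and nonnegative if all entries are nonnegative. Vector inequalities are componentwise; $\mathbf{1}_n$ is the vector of ones. *)

theory Defs
  imports "HOL-Analysis.Analysis"
begin

definition mat_pow :: "real ^'n^'n \<Rightarrow> nat \<Rightarrow> real ^'n^'n" where
  "mat_pow A k = (((**) A) ^^ k) (mat 1)"

definition mat_exp :: "real ^'n^'n \<Rightarrow> real ^'n^'n" where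
  "mat_exp A = (\<Sum>k. (1 / fact k) *\<^sub>R mat_pow A k)"

definition metzler :: "real ^'n^'n \<Rightarrow> bool" where
  "metzler A \<longleftrightarrow> (\<forall>i j. i \<noteq> j \<longrightarrow> A $ i $ j \<ge> 0)"

definition nonneg_mat :: "real ^'n^'n \<Rightarrow> bool" where
  "nonneg_mat A \<longleftrightarrow> (\<forall>i j. A $ i $ j \<ge> 0)"

definition pos_vec :: "real ^'n \<Rightarrow> bool" where
  "pos_vec v \<longleftrightarrow> (\<forall>i. v $ i > 0)"

definition nonneg_vec :: "real ^'n \<Rightarrow> bool" where
  "nonneg_vec v \<longleftrightarrow> (\<forall>i. v $ i \<ge> 0)"

end

theory Submission
  imports Defs
begin

text \<open>
  For fixed \<open>\<theta>\<close> the quantity \<open>\<lambda>\<^sup>T (exp(\<theta>A) J - I) x\<close> is linear in \<open>x\<close>, so (a) gives (b)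
  by testing on the unit vectors. For (b) \<Rightarrow> (c) take \<open>\<zeta>(\<tau>)\<^sup>T = \<lambda>\<^sup>T exp(\<tau>A)\<close>, which satisfies
  the differential inequality with equality; compactness of \<open>[Tmin, Tmax]\<close> turns the strict
  inequality of (b) into a uniform margin \<open>\<epsilon>\<close>. For (c) \<Rightarrow> (a) take \<open>\<lambda> = \<zeta>(0)\<close> and
  \<open>\<mu> = \<epsilon>\<one>\<close>: since \<open>A\<close> is Metzler, \<open>exp(sA) \<ge> 0\<close>, so \<open>s \<mapsto> \<zeta>(s)\<^sup>T exp((\<theta> - s)A)\<close> has
  nonnegative derivative and \<open>\<zeta>(0)\<^sup>T exp(\<theta>A) \<le> \<zeta>(\<theta>)\<^sup>T\<close>; multiplying by \<open>J \<ge> 0\<close> and applying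
  the jump condition gives the decrease of \<open>V\<close> along nonnegative states.
\<close>

text \<open>With the operator norm, square matrices form a Banach algebra, so the library's theory of
  exp (convergence, derivative, exp of commuting sums) applies to mat_exp.\<close>

typedef ('n::finite) sqmat = "UNIV :: (real^'n^'n) set"
  morphisms mat_of_sqmat sqmat_of_mat ..

setup_lifting type_definition_sqmat

lemma matrix_add_rdistrib: "(B + C) ** A = B ** A + C ** A"
  by (vector matrix_matrix_mult_def sum.distrib[symmetric] field_simps)

instantiation sqmat :: (finite) real_normed_algebra_1
begin

lift_definition zero_sqmat :: "'a sqmat" is 0 .
lift_definition one_sqmat :: "'a sqmat" is "mat 1" .
lift_definition plus_sqmat :: "'a sqmat \<Rightarrow> 'a sqmat \<Rightarrow> 'a sqmat" is "(+)" .
lift_definition minus_sqmat :: "'a sqmat \<Rightarrow> 'a sqmat \<Rightarrow> 'a sqmat" is "(-)" .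
lift_definition uminus_sqmat :: "'a sqmat \<Rightarrow> 'a sqmat" is uminus .
lift_definition times_sqmat :: "'a sqmat \<Rightarrow> 'a sqmat \<Rightarrow> 'a sqmat" is "(**)" .
lift_definition scaleR_sqmat :: "real \<Rightarrow> 'a sqmat \<Rightarrow> 'a sqmat" is scaleR .
lift_definition norm_sqmat :: "'a sqmat \<Rightarrow> real" is "\<lambda>M. onorm ((*v) M)" .

definition dist_sqmat :: "'a sqmat \<Rightarrow> 'a sqmat \<Rightarrow> real"
  where "dist_sqmat a b = norm (a - b)"

definition sgn_sqmat :: "'a sqmat \<Rightarrow> 'a sqmat"
  where "sgn_sqmat x = inverse (norm x) *\<^sub>R x"

definition uniformity_sqmat :: "('a sqmat \<times> 'a sqmat) filter"
  where "uniformity_sqmat = (INF e\<in>{0<..}. principal {(x, y). dist x y < e})"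

definition open_sqmat :: "'a sqmat set \<Rightarrow> bool"
  where "open_sqmat S = (\<forall>x\<in>S. \<forall>\<^sub>F (x', y) in uniformity. x' = x \<longrightarrow> y \<in> S)"

instance
proof
  fix a b c :: "'a sqmat" and r s :: real
  have bl: "bounded_linear ((*v) M)" for M :: "real^'a^'a" by simp
  show "a * b * c = a * (b * c)" by transfer (simp add: matrix_mul_assoc)
  show "1 * a = a" "a * 1 = a" by (transfer, simp)+
  show "(a + b) * c = a * c + b * c" by transfer (simp add: matrix_add_rdistrib)
  show "a * (b + c) = a * b + a * c" by transfer (simp add: matrix_add_ldistrib)
  show "(0::'a sqmat) \<noteq> 1" by transfer (simp add: vec_eq_iff mat_def)
  show "a + b + c = a + (b + c)" "a + b = b + a" "0 + a = a" "- a + a = 0" "a - b = a + - b"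
    by (transfer, simp)+
  show "r *\<^sub>R (a + b) = r *\<^sub>R a + r *\<^sub>R b" "(r + s) *\<^sub>R a = r *\<^sub>R a + s *\<^sub>R a"
    "r *\<^sub>R s *\<^sub>R a = (r * s) *\<^sub>R a" "1 *\<^sub>R a = a"
    by (transfer, simp add: scaleR_right_distrib scaleR_left_distrib)+
  show "r *\<^sub>R a * b = r *\<^sub>R (a * b)" "a * r *\<^sub>R b = r *\<^sub>R (a * b)"
    by (transfer, simp add: matrix_scalar_ac scalar_matrix_assoc)+
  show "sgn a = inverse (norm a) *\<^sub>R a" "dist a b = norm (a - b)"
    by (simp_all add: sgn_sqmat_def dist_sqmat_def)
  show "(uniformity :: ('a sqmat \<times> 'a sqmat) filter)
      = (INF e\<in>{0<..}. principal {(x, y). dist x y < e})"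
    by (simp add: uniformity_sqmat_def)
  show "open U = (\<forall>x\<in>U. \<forall>\<^sub>F (x', y) in uniformity. x' = x \<longrightarrow> y \<in> U)" for U :: "'a sqmat set"
    by (simp add: open_sqmat_def)
  show "(norm a = 0) = (a = 0)"
    by transfer (use matrix_eq[where B=0] in \<open>auto simp: onorm_eq_0 fun_eq_iff\<close>)
  show "norm (a + b) \<le> norm a + norm b"
  proof transfer
    fix a b :: "real^'a^'a"
    have "(*v) (a + b) = (\<lambda>x. a *v x + b *v x)"
      by (simp add: fun_eq_iff matrix_vector_mult_add_rdistrib)
    then show "onorm ((*v) (a + b)) \<le> onorm ((*v) a) + onorm ((*v) b)"
      using onorm_triangle[OF bl bl] by simp
  qed
  show "norm (r *\<^sub>R a) = \<bar>r\<bar> * norm a"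
  proof transfer
    fix r and a :: "real^'a^'a"
    have "(*v) (r *\<^sub>R a) = (\<lambda>x. r *\<^sub>R (a *v x))"
      by (simp add: fun_eq_iff scaleR_matrix_vector_assoc)
    then show "onorm ((*v) (r *\<^sub>R a)) = \<bar>r\<bar> * onorm ((*v) a)"
      using onorm_scaleR[OF bl] by simp
  qed
  show "norm (a * b) \<le> norm a * norm b"
  proof transfer
    fix a b :: "real^'a^'a"
    have "(*v) (a ** b) = (*v) a \<circ> (*v) b"
      by (simp add: fun_eq_iff matrix_vector_mul_assoc)
    then show "onorm ((*v) (a ** b)) \<le> onorm ((*v) a) * onorm ((*v) b)"
      using onorm_compose[OF bl bl] by (simp add: mult.commute)
  qed
  show "norm (1::'a sqmat) = 1"
  proof transfer
    have "(*v) (mat 1::real^'a^'a) = (\<lambda>x. x)"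
      by (simp add: fun_eq_iff)
    then show "onorm ((*v) (mat 1::real^'a^'a)) = 1"
      using onorm_id by simp
  qed
qed

end

lemma norm_mat_of_sqmat_le:
  "norm (mat_of_sqmat (M::'n::finite sqmat)) \<le> norm M * (CARD('n) * CARD('n))"
proof -
  have "norm (mat_of_sqmat M) \<le> (\<Sum>i\<in>UNIV. norm (mat_of_sqmat M $ i))"
    unfolding norm_vec_def by (rule L2_set_le_sum) auto
  also have "\<dots> \<le> (\<Sum>i\<in>UNIV. \<Sum>j\<in>UNIV. \<bar>mat_of_sqmat M $ i $ j\<bar>)"
    by (intro sum_mono norm_le_l1_cart)
  also have "\<dots> \<le> (\<Sum>i\<in>(UNIV::'n set). \<Sum>j\<in>(UNIV::'n set). norm M)"
    by (intro sum_mono) (simp add: norm_sqmat.rep_eq matrix_component_le_onorm)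
  finally show ?thesis by (simp add: algebra_simps)
qed

lemma norm_sqmat_of_mat_le:
  "norm (sqmat_of_mat (M::real^'n::finite^'n)) \<le> norm M * (CARD('n) * CARD('n))"
proof -
  have "norm (sqmat_of_mat M) \<le> (\<Sum>i\<in>(UNIV::'n set). \<Sum>j\<in>(UNIV::'n set). \<bar>M $ i $ j\<bar>)"
    by (simp add: norm_sqmat.rep_eq sqmat_of_mat_inverse onorm_le_matrix_component_sum)
  also have "\<dots> \<le> (\<Sum>i\<in>(UNIV::'n set). \<Sum>j\<in>(UNIV::'n set). norm M)"
    by (intro sum_mono order_trans[OF component_le_norm_cart Finite_Cartesian_Product.norm_nth_le])
  finally show ?thesis by (simp add: algebra_simps)
qed

lemma bounded_linear_mat_of_sqmat: "bounded_linear mat_of_sqmat"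
  by (rule bounded_linear_intro[OF _ _ norm_mat_of_sqmat_le])
    (simp_all add: plus_sqmat.rep_eq scaleR_sqmat.rep_eq)

lemma bounded_linear_sqmat_of_mat: "bounded_linear sqmat_of_mat"
  by (rule bounded_linear_intro[OF _ _ norm_sqmat_of_mat_le])
    (simp_all add: plus_sqmat.abs_eq scaleR_sqmat.abs_eq)

instance sqmat :: (finite) banach
proof
  fix X :: "nat \<Rightarrow> 'a sqmat"
  assume "Cauchy X"
  then have "Cauchy (\<lambda>n. mat_of_sqmat (X n))"
    by (rule bounded_linear.Cauchy[OF bounded_linear_mat_of_sqmat])
  then obtain L where "(\<lambda>n. mat_of_sqmat (X n)) \<longlonglongrightarrow> L"
    using Cauchy_convergent_iff convergent_def by blast
  then have "(\<lambda>n. sqmat_of_mat (mat_of_sqmat (X n))) \<longlonglongrightarrow> sqmat_of_mat L"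
    by (rule bounded_linear.tendsto[OF bounded_linear_sqmat_of_mat])
  then show "convergent X"
    by (auto simp: mat_of_sqmat_inverse convergent_def)
qed

lemma mat_of_sqmat_power: "mat_of_sqmat (M ^ k) = mat_pow (mat_of_sqmat M) k"
  by (induction k) (simp_all add: mat_pow_def one_sqmat.rep_eq times_sqmat.rep_eq)

lemma sums_mat_of_sqmat_exp:
  "(\<lambda>k. (1 / fact k) *\<^sub>R mat_pow M k) sums mat_of_sqmat (exp (sqmat_of_mat M))"
  using bounded_linear.sums[OF bounded_linear_mat_of_sqmat exp_converges[of "sqmat_of_mat M"]]
  by (simp add: scaleR_sqmat.rep_eq mat_of_sqmat_power sqmat_of_mat_inverse inverse_eq_divide)

lemma mat_exp_sums: "(\<lambda>k. (1 / fact k) *\<^sub>R mat_pow M k) sums mat_exp M"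
  unfolding mat_exp_def by (rule summable_sums[OF sums_summable[OF sums_mat_of_sqmat_exp]])

lemma mat_exp_eq_exp: "mat_exp M = mat_of_sqmat (exp (sqmat_of_mat M))"
  using mat_exp_sums sums_mat_of_sqmat_exp sums_unique2 by blast

lemma mat_exp_zero [simp]: "mat_exp (0::real^'n::finite^'n) = mat 1"
  by (simp add: mat_exp_eq_exp zero_sqmat_def[symmetric] one_sqmat.rep_eq)

lemma has_vector_derivative_mat_exp_right:
  "((\<lambda>t. mat_exp (t *\<^sub>R A)) has_vector_derivative mat_exp (t *\<^sub>R A) ** A) (at t within S)"
  using bounded_linear.has_vector_derivative[OF bounded_linear_mat_of_sqmat
      exp_scaleR_has_vector_derivative_right[of "sqmat_of_mat A" t S]]
  by (simp add: mat_exp_eq_exp scaleR_sqmat.abs_eq times_sqmat.rep_eq sqmat_of_mat_inverse)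

lemma has_vector_derivative_mat_exp_left:
  "((\<lambda>t. mat_exp (t *\<^sub>R A)) has_vector_derivative A ** mat_exp (t *\<^sub>R A)) (at t within S)"
  using has_vector_derivative_at_within[OF bounded_linear.has_vector_derivative[OF
      bounded_linear_mat_of_sqmat exp_scaleR_has_vector_derivative_left[of "sqmat_of_mat A" t]]]
  by (simp add: mat_exp_eq_exp scaleR_sqmat.abs_eq times_sqmat.rep_eq sqmat_of_mat_inverse)

section \<open>Nonnegativity of the exponential of a Metzler matrix\<close>

lemma mat_exp_add_scalar:
  "mat_exp (M + r *\<^sub>R mat 1) = exp r *\<^sub>R mat_exp (M::real^'n::finite^'n)"
proof -
  have "sqmat_of_mat (M + r *\<^sub>R mat 1) = sqmat_of_mat M + of_real r"
    by (simp add: of_real_def plus_sqmat.abs_eq scaleR_sqmat.abs_eq one_sqmat_def)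
  moreover have "exp (sqmat_of_mat M + of_real r) = exp (sqmat_of_mat M) * exp (of_real r)"
    by (rule exp_add_commuting) (simp add: of_real_def)
  moreover have "exp (of_real r :: 'n sqmat) = exp r *\<^sub>R 1"
    using exp_of_real[of r] by (simp add: of_real_def)
  ultimately show ?thesis
    by (simp add: mat_exp_eq_exp scaleR_sqmat.rep_eq)
qed

lemma nonneg_mat_mult: "nonneg_mat M \<Longrightarrow> nonneg_mat N \<Longrightarrow> nonneg_mat (M ** N)"
  unfolding nonneg_mat_def matrix_matrix_mult_def by (auto intro!: sum_nonneg)

lemma nonneg_mat_pow: "nonneg_mat M \<Longrightarrow> nonneg_mat (mat_pow M k)"
  by (induction k) (simp_all add: mat_pow_def nonneg_mat_mult, simp add: nonneg_mat_def mat_def)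

lemma nonneg_mat_scaleR: "0 \<le> r \<Longrightarrow> nonneg_mat M \<Longrightarrow> nonneg_mat (r *\<^sub>R M)"
  by (simp add: nonneg_mat_def)

lemma nonneg_mat_exp:
  assumes "nonneg_mat (M::real^'n::finite^'n)"
  shows "nonneg_mat (mat_exp M)"
  unfolding nonneg_mat_def
proof (intro allI)
  fix i j
  have "bounded_linear (\<lambda>N::real^'n^'n. N $ i $ j)"
    using bounded_linear_compose[OF bounded_linear_vec_nth bounded_linear_vec_nth] by blast
  then have sums: "(\<lambda>k. ((1 / fact k) *\<^sub>R mat_pow M k) $ i $ j) sums (mat_exp M $ i $ j)"
    by (rule bounded_linear.sums[OF _ mat_exp_sums])
  have terms_nonneg: "0 \<le> ((1 / fact k) *\<^sub>R mat_pow M k) $ i $ j" for k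
    using nonneg_mat_pow[OF assms] by (simp add: nonneg_mat_def)
  show "0 \<le> mat_exp M $ i $ j"
    by (rule sums_le[OF terms_nonneg sums_zero sums])
qed

lemma nonneg_mat_exp_metzler:
  fixes A :: "real^'n::finite^'n"
  assumes "metzler A" and "0 \<le> t"
  shows "nonneg_mat (mat_exp (t *\<^sub>R A))"
proof -
  define c where "c = (\<Sum>i\<in>UNIV. \<bar>A $ i $ i\<bar>)"
  have diag_bound: "- A $ i $ i \<le> c" for i
    unfolding c_def by (rule order_trans[OF abs_ge_minus_self member_le_sum[of i]]) auto
  have "nonneg_mat (A + c *\<^sub>R mat 1)"
    unfolding nonneg_mat_def
  proof (intro allI)
    fix i j
    show "0 \<le> (A + c *\<^sub>R mat 1) $ i $ j"
      using assms(1) diag_bound[of i] by (cases "i = j") (auto simp: metzler_def mat_def)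
  qed
  then have "nonneg_mat (exp (- (t * c)) *\<^sub>R mat_exp (t *\<^sub>R (A + c *\<^sub>R mat 1)))"
    using assms(2) by (intro nonneg_mat_scaleR nonneg_mat_exp) auto
  moreover have "mat_exp (t *\<^sub>R A) = exp (- (t * c)) *\<^sub>R mat_exp (t *\<^sub>R (A + c *\<^sub>R mat 1))"
    using mat_exp_add_scalar[of "t *\<^sub>R (A + c *\<^sub>R mat 1)" "- (t * c)"]
    by (simp add: algebra_simps)
  ultimately show ?thesis
    by simp
qed

section \<open>A comparison principle for the adjoint flow\<close>

lemma vector_matrix_mult_mono:
  "nonneg_mat M \<Longrightarrow> u \<le> v \<Longrightarrow> u v* M \<le> v v* M"
  unfolding nonneg_mat_def less_eq_vec_def vector_matrix_mult_def
  by (auto intro!: sum_mono mult_right_mono)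

lemma inner_mono_nonneg:
  fixes u v x :: "real^'n::finite"
  shows "u \<le> v \<Longrightarrow> 0 \<le> x \<Longrightarrow> u \<bullet> x \<le> v \<bullet> x"
  unfolding less_eq_vec_def inner_vec_def by (auto intro!: sum_mono mult_right_mono)

lemma bounded_bilinear_vector_matrix_mult:
  "bounded_bilinear (\<lambda>(v::real^'m::finite) (M::real^'n::finite^'m). v v* M)"
proof -
  have "linear (\<lambda>M::real^'n^'m. v v* M)" for v :: "real^'m"
    by (rule linearI) (simp_all add: vector_matrix_mult_add_rdistrib vector_scaleR_matrix_ac)
  moreover have "linear (\<lambda>v::real^'m. v v* M)" for M :: "real^'n^'m"
    by (rule linearI) (simp_all add: vector_matrix_left_distrib scaleR_vector_matrix_assoc)
  ultimately show ?thesis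
    unfolding bilinear_conv_bounded_bilinear[symmetric] bilinear_def by blast
qed

lemma has_vector_derivative_vector_mat_exp:
  "((\<lambda>t. v v* mat_exp (t *\<^sub>R A)) has_vector_derivative v v* (mat_exp (t *\<^sub>R A) ** A))
    (at t within S)"
  using bounded_bilinear.has_vector_derivative[OF bounded_bilinear_vector_matrix_mult
      has_vector_derivative_const has_vector_derivative_mat_exp_right]
  by simp

lemma metzler_comparison:
  fixes A :: "real^'n::finite^'n" and \<zeta> \<zeta>' :: "real \<Rightarrow> real^'n"
  assumes "metzler A" and "0 \<le> \<theta>"
    and deriv: "\<And>s. s \<in> {0..\<theta>} \<Longrightarrow> (\<zeta> has_vector_derivative \<zeta>' s) (at s within {0..\<theta>})"
    and super: "\<And>s. s \<in> {0..\<theta>} \<Longrightarrow> \<zeta> s v* A \<le> \<zeta>' s"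
  shows "\<zeta> 0 v* mat_exp (\<theta> *\<^sub>R A) \<le> \<zeta> \<theta>"
proof -
  define E where "E s = mat_exp ((\<theta> - s) *\<^sub>R A)" for s
  define w where "w s = \<zeta> s v* E s" for s
  define w' where "w' s = (\<zeta>' s - \<zeta> s v* A) v* E s" for s
  have w_deriv: "(w has_vector_derivative w' s) (at s within {0..\<theta>})" if "s \<in> {0..\<theta>}" for s
  proof -
    have "(E has_vector_derivative - (A ** E s)) (at s within {0..\<theta>})"
      unfolding E_def[abs_def]
      using vector_diff_chain_within[OF has_vector_derivative_diff[OF
          has_vector_derivative_const has_vector_derivative_id] has_vector_derivative_mat_exp_left]
      by (simp add: o_def)
    from bounded_bilinear.has_vector_derivative[OF bounded_bilinear_vector_matrix_mult
        deriv[OF that] this]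
    show ?thesis
      unfolding w_def[abs_def] w'_def
      by (simp add: vector_matrix_mul_assoc vector_matrix_mult_diff_distrib
          vector_matrix_mult_diff_rdistrib[of _ 0, simplified])
  qed
  have w'_nonneg: "0 \<le> w' s" if "s \<in> {0..\<theta>}" for s
    using vector_matrix_mult_mono[of "E s" 0] super[OF that] nonneg_mat_exp_metzler[OF assms(1)] that
    by (simp add: w'_def E_def)
  have "w 0 $ j \<le> w \<theta> $ j" for j
  proof (rule DERIV_nonneg_imp_increasing_open[OF assms(2)])
    have wj_deriv: "((\<lambda>s. w s $ j) has_real_derivative w' s $ j) (at s within {0..\<theta>})"
      if "s \<in> {0..\<theta>}" for s
      using bounded_linear.has_vector_derivative[OF bounded_linear_vec_nth w_deriv[OF that]]
      by (simp add: has_real_derivative_iff_has_vector_derivative)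
    then show "continuous_on {0..\<theta>} (\<lambda>s. w s $ j)"
      by (rule DERIV_continuous_on)
    fix s assume "0 < s" "s < \<theta>"
    then show "\<exists>y. ((\<lambda>s. w s $ j) has_real_derivative y) (at s) \<and> 0 \<le> y"
      using wj_deriv[of s] w'_nonneg[of s] at_within_Icc_at[of 0 s \<theta>]
      by (auto simp: less_eq_vec_def)
  qed
  then show ?thesis
    by (simp add: less_eq_vec_def w_def E_def)
qed

section \<open>The three conditions\<close>

lemma compact_uniform_negative_margin:
  fixes f :: "'a::topological_space \<Rightarrow> real^'n::finite"
  assumes "compact S" and "continuous_on S f" and neg: "\<And>x i. x \<in> S \<Longrightarrow> f x $ i < 0"
  shows "\<exists>\<epsilon>>0. \<forall>x\<in>S. f x + \<epsilon> *\<^sub>R 1 \<le> 0"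
proof (cases "S = {}")
  case False
  have "\<exists>m\<in>S. \<forall>x\<in>S. f x $ i \<le> f m $ i" for i
    using assms(1,2) False by (intro continuous_attains_sup continuous_on_component)
  then obtain m where m: "\<And>i. m i \<in> S" and max: "\<And>i x. x \<in> S \<Longrightarrow> f x $ i \<le> f (m i) $ i"
    by metis
  define \<epsilon> where "\<epsilon> = Min (range (\<lambda>i. - f (m i) $ i))"
  have "\<epsilon> > 0"
    using neg[OF m] by (simp add: \<epsilon>_def)
  moreover have "\<epsilon> \<le> - f (m i) $ i" for i
    unfolding \<epsilon>_def by (rule Min_le) auto
  then have "f x $ i + \<epsilon> \<le> 0" if "x \<in> S" for x i
    using max[OF that, of i] by (smt (verit))
  ultimately show ?thesis
    by (auto simp: less_eq_vec_def)
qed (auto intro: exI[of _ 1])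

definition linear_lyapunov_decrease :: "real^'n^'n \<Rightarrow> real^'n^'n \<Rightarrow> real \<Rightarrow> real \<Rightarrow> bool" where
  "linear_lyapunov_decrease A J Tmin Tmax \<longleftrightarrow>
    (\<exists>lam mu :: real ^'n. pos_vec lam \<and> pos_vec mu \<and>
      (\<forall>x. nonneg_vec x \<longrightarrow> (\<forall>\<theta>\<in>{Tmin..Tmax}.
         lam \<bullet> (mat_exp (\<theta> *\<^sub>R A) *v (J *v x)) - lam \<bullet> x \<le> - (mu \<bullet> x))))"

definition row_contraction :: "real^'n^'n \<Rightarrow> real^'n^'n \<Rightarrow> real \<Rightarrow> real \<Rightarrow> bool" where
  "row_contraction A J Tmin Tmax \<longleftrightarrow>
    (\<exists>lam :: real ^'n. pos_vec lam \<and>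
      (\<forall>\<theta>\<in>{Tmin..Tmax}. \<forall>i. (lam v* (mat_exp (\<theta> *\<^sub>R A) ** J - mat 1)) $ i < 0))"

definition clock_dependent_lyapunov :: "real^'n^'n \<Rightarrow> real^'n^'n \<Rightarrow> real \<Rightarrow> real \<Rightarrow> bool" where
  "clock_dependent_lyapunov A J Tmin Tmax \<longleftrightarrow>
    (\<exists>(\<zeta> :: real \<Rightarrow> real ^'n) \<zeta>' (\<epsilon>::real). \<epsilon> > 0 \<and> pos_vec (\<zeta> 0) \<and>
      (\<forall>\<tau>\<in>{0..Tmax}. (\<zeta> has_vector_derivative \<zeta>' \<tau>) (at \<tau> within {0..Tmax})) \<and>
      (\<forall>\<tau>\<in>{0..Tmax}. \<forall>i. (\<zeta> \<tau> v* A - \<zeta>' \<tau>) $ i \<le> 0) \<and>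
      (\<forall>\<theta>\<in>{Tmin..Tmax}. \<forall>i. (\<zeta> \<theta> v* J - \<zeta> 0 + \<epsilon> *\<^sub>R (\<chi> j. 1)) $ i \<le> 0))"

lemma linear_lyapunov_decrease_imp_row_contraction:
  fixes A J :: "real^'n::finite^'n"
  assumes "linear_lyapunov_decrease A J Tmin Tmax"
  shows "row_contraction A J Tmin Tmax"
proof -
  obtain lam mu :: "real^'n" where "pos_vec lam" "pos_vec mu"
    and decrease: "\<forall>x. nonneg_vec x \<longrightarrow> (\<forall>\<theta>\<in>{Tmin..Tmax}.
      lam \<bullet> (mat_exp (\<theta> *\<^sub>R A) *v (J *v x)) - lam \<bullet> x \<le> - (mu \<bullet> x))"
    using assms unfolding linear_lyapunov_decrease_def by blast
  have "(lam v* (mat_exp (\<theta> *\<^sub>R A) ** J - mat 1)) $ i < 0" if "\<theta> \<in> {Tmin..Tmax}" for \<theta> i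
  proof -
    have "nonneg_vec (axis i 1)"
      by (simp add: nonneg_vec_def axis_def)
    then have "lam \<bullet> (mat_exp (\<theta> *\<^sub>R A) *v (J *v axis i 1)) - lam \<bullet> axis i 1 \<le> - (mu \<bullet> axis i 1)"
      using decrease that by blast
    moreover have "0 < mu $ i"
      using \<open>pos_vec mu\<close> by (simp add: pos_vec_def)
    ultimately show ?thesis
      by (simp add: matrix_vector_mul_assoc dot_lmul_matrix[symmetric] inner_axis pos_vec_def
          vector_matrix_mult_diff_rdistrib)
  qed
  then show ?thesis
    unfolding row_contraction_def using \<open>pos_vec lam\<close> by blast
qed

lemma row_contraction_imp_clock_dependent_lyapunov:
  fixes A J :: "real^'n::finite^'n"
  assumes "row_contraction A J Tmin Tmax"
  shows "clock_dependent_lyapunov A J Tmin Tmax"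
proof -
  obtain lam :: "real^'n" where "pos_vec lam"
    and row: "\<forall>\<theta>\<in>{Tmin..Tmax}. \<forall>i. (lam v* (mat_exp (\<theta> *\<^sub>R A) ** J - mat 1)) $ i < 0"
    using assms unfolding row_contraction_def by blast
  define \<zeta> where "\<zeta> \<tau> = lam v* mat_exp (\<tau> *\<^sub>R A)" for \<tau>
  define \<zeta>' where "\<zeta>' \<tau> = lam v* (mat_exp (\<tau> *\<^sub>R A) ** A)" for \<tau>
  have \<zeta>_deriv: "(\<zeta> has_vector_derivative \<zeta>' \<tau>) (at \<tau> within S)" for \<tau> S
    unfolding \<zeta>_def[abs_def] \<zeta>'_def by (rule has_vector_derivative_vector_mat_exp)
  have "continuous_on {Tmin..Tmax} \<zeta>"
    by (rule continuous_on_vector_derivative[OF \<zeta>_deriv])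
  then have "continuous_on {Tmin..Tmax} (\<lambda>\<theta>. \<zeta> \<theta> v* J)"
    by (rule bounded_linear.continuous_on[OF
          bounded_bilinear.bounded_linear_left[OF bounded_bilinear_vector_matrix_mult]])
  then have "continuous_on {Tmin..Tmax} (\<lambda>\<theta>. \<zeta> \<theta> v* J - \<zeta> 0)"
    by (intro continuous_on_diff continuous_on_const)
  moreover have "(\<zeta> \<theta> v* J - \<zeta> 0) $ i < 0" if "\<theta> \<in> {Tmin..Tmax}" for \<theta> i
    using row that by (simp add: \<zeta>_def vector_matrix_mult_diff_rdistrib vector_matrix_mul_assoc)
  ultimately obtain \<epsilon> where "\<epsilon> > 0" and margin: "\<forall>\<theta>\<in>{Tmin..Tmax}. \<zeta> \<theta> v* J - \<zeta> 0 + \<epsilon> *\<^sub>R 1 \<le> 0"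
    using compact_uniform_negative_margin[of "{Tmin..Tmax}"] by blast
  have "pos_vec (\<zeta> 0)"
    using \<open>pos_vec lam\<close> by (simp add: \<zeta>_def)
  moreover have "\<zeta> \<tau> v* A - \<zeta>' \<tau> = 0" for \<tau>
    by (simp add: \<zeta>_def \<zeta>'_def vector_matrix_mul_assoc)
  ultimately show ?thesis
    unfolding clock_dependent_lyapunov_def
    using \<open>\<epsilon> > 0\<close> \<zeta>_deriv margin
    by (intro exI[of _ \<zeta>] exI[of _ \<zeta>'] exI[of _ \<epsilon>]) (auto simp: less_eq_vec_def one_vec_def)
qed

lemma clock_dependent_lyapunov_imp_linear_lyapunov_decrease:
  fixes A J :: "real^'n::finite^'n"
  assumes "metzler A" and "nonneg_mat J" and "0 \<le> Tmin"
    and "clock_dependent_lyapunov A J Tmin Tmax"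
  shows "linear_lyapunov_decrease A J Tmin Tmax"
proof -
  obtain \<zeta> \<zeta>' :: "real \<Rightarrow> real^'n" and \<epsilon> where "\<epsilon> > 0" and "pos_vec (\<zeta> 0)"
    and deriv: "\<forall>\<tau>\<in>{0..Tmax}. (\<zeta> has_vector_derivative \<zeta>' \<tau>) (at \<tau> within {0..Tmax})"
    and flow: "\<forall>\<tau>\<in>{0..Tmax}. \<forall>i. (\<zeta> \<tau> v* A - \<zeta>' \<tau>) $ i \<le> 0"
    and jump: "\<forall>\<theta>\<in>{Tmin..Tmax}. \<forall>i. (\<zeta> \<theta> v* J - \<zeta> 0 + \<epsilon> *\<^sub>R (\<chi> j. 1)) $ i \<le> 0"
    using assms(4) unfolding clock_dependent_lyapunov_def by blast
  show ?thesis
    unfolding linear_lyapunov_decrease_def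
  proof (intro exI conjI allI impI ballI)
    show "pos_vec (\<zeta> 0)" "pos_vec (\<epsilon> *\<^sub>R 1 :: real^'n)"
      using \<open>\<epsilon> > 0\<close> \<open>pos_vec (\<zeta> 0)\<close> by (simp_all add: pos_vec_def)
    fix x :: "real^'n" and \<theta> assume "nonneg_vec x" and \<theta>: "\<theta> \<in> {Tmin..Tmax}"
    have comparison: "\<zeta> 0 v* mat_exp (\<theta> *\<^sub>R A) \<le> \<zeta> \<theta>"
    proof (rule metzler_comparison[OF assms(1)])
      show "0 \<le> \<theta>"
        using \<theta> \<open>0 \<le> Tmin\<close> by simp
      fix s assume "s \<in> {0..\<theta>}"
      then have s: "s \<in> {0..Tmax}" and "{0..\<theta>} \<subseteq> {0..Tmax}"
        using \<theta> by auto
      then show "(\<zeta> has_vector_derivative \<zeta>' s) (at s within {0..\<theta>})"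
        using deriv has_vector_derivative_within_subset by blast
      show "\<zeta> s v* A \<le> \<zeta>' s"
        using flow s by (auto simp: less_eq_vec_def)
    qed
    have "\<zeta> 0 v* (mat_exp (\<theta> *\<^sub>R A) ** J) \<le> \<zeta> \<theta> v* J"
      using vector_matrix_mult_mono[OF \<open>nonneg_mat J\<close> comparison] by (simp add: vector_matrix_mul_assoc)
    also have "\<dots> \<le> \<zeta> 0 - \<epsilon> *\<^sub>R 1"
      unfolding less_eq_vec_def
    proof
      fix i
      have "(\<zeta> \<theta> v* J - \<zeta> 0 + \<epsilon> *\<^sub>R (\<chi> j. 1)) $ i \<le> 0"
        using jump \<theta> by blast
      then show "(\<zeta> \<theta> v* J) $ i \<le> (\<zeta> 0 - \<epsilon> *\<^sub>R 1) $ i"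
        by (simp add: one_vec_def)
    qed
    finally have "(\<zeta> 0 v* (mat_exp (\<theta> *\<^sub>R A) ** J)) \<bullet> x \<le> (\<zeta> 0 - \<epsilon> *\<^sub>R 1) \<bullet> x"
      using \<open>nonneg_vec x\<close> by (intro inner_mono_nonneg) (auto simp: nonneg_vec_def less_eq_vec_def)
    then show "\<zeta> 0 \<bullet> (mat_exp (\<theta> *\<^sub>R A) *v (J *v x)) - \<zeta> 0 \<bullet> x \<le> - ((\<epsilon> *\<^sub>R 1) \<bullet> x)"
      by (simp add: matrix_vector_mul_assoc dot_lmul_matrix inner_diff_left)
  qed
qed

theorem theorem5:
  fixes A J :: "real ^'n^'n" and Tmin Tmax :: real
  assumes "metzler A" and "nonneg_mat J"
    and "0 < Tmin" and "Tmin \<le> Tmax"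
  shows "((\<exists>lam mu :: real ^'n. pos_vec lam \<and> pos_vec mu \<and>
            (\<forall>x. nonneg_vec x \<longrightarrow> (\<forall>\<theta>\<in>{Tmin..Tmax}.
               lam \<bullet> (mat_exp (\<theta> *\<^sub>R A) *v (J *v x)) - lam \<bullet> x \<le> - (mu \<bullet> x))))
      \<longleftrightarrow>
         (\<exists>lam :: real ^'n. pos_vec lam \<and>
            (\<forall>\<theta>\<in>{Tmin..Tmax}. \<forall>i. (lam v* (mat_exp (\<theta> *\<^sub>R A) ** J - mat 1)) $ i < 0)))
    \<and> ((\<exists>lam :: real ^'n. pos_vec lam \<and>
            (\<forall>\<theta>\<in>{Tmin..Tmax}. \<forall>i. (lam v* (mat_exp (\<theta> *\<^sub>R A) ** J - mat 1)) $ i < 0))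
      \<longleftrightarrow>
         (\<exists>(\<zeta> :: real \<Rightarrow> real ^'n) \<zeta>' (\<epsilon>::real). \<epsilon> > 0 \<and> pos_vec (\<zeta> 0) \<and>
            (\<forall>\<tau>\<in>{0..Tmax}. (\<zeta> has_vector_derivative \<zeta>' \<tau>) (at \<tau> within {0..Tmax})) \<and>
            (\<forall>\<tau>\<in>{0..Tmax}. \<forall>i. (\<zeta> \<tau> v* A - \<zeta>' \<tau>) $ i \<le> 0) \<and>
            (\<forall>\<theta>\<in>{Tmin..Tmax}. \<forall>i. (\<zeta> \<theta> v* J - \<zeta> 0 + \<epsilon> *\<^sub>R (\<chi> j. 1)) $ i \<le> 0)))"
proof -
  note c_imp_a = clock_dependent_lyapunov_imp_linear_lyapunov_decrease[OF assms(1,2)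
      less_imp_le[OF assms(3)]]
  have "linear_lyapunov_decrease A J Tmin Tmax \<longleftrightarrow> row_contraction A J Tmin Tmax"
    using linear_lyapunov_decrease_imp_row_contraction row_contraction_imp_clock_dependent_lyapunov
      c_imp_a by blast
  moreover have "row_contraction A J Tmin Tmax \<longleftrightarrow> clock_dependent_lyapunov A J Tmin Tmax"
    using linear_lyapunov_decrease_imp_row_contraction row_contraction_imp_clock_dependent_lyapunov
      c_imp_a by blast
  ultimately show ?thesis
    unfolding linear_lyapunov_decrease_def row_contraction_def clock_dependent_lyapunov_def
    by (rule conjI)
qed

end
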